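(* Let $S,T,Q\ge1$ be integers. Consider a separable ARMA layer with moving-average kernel $W$ (for each pair $(t,s)$ a finitely supported real 2D filter $W_{t,s}$) and, for each output channel $t\in\{1,\dots,T\}$ and each $q\in\{1,\dots,Q\}$, length-3 real filters $f^{q}_{\cdot,t}=(f^{q}_{-1,t},f^{q}_{0,t},f^{q}_{1,t})$ and $g^{q}_{\cdot,t}=(g^{q}_{-1,t},g^{q}_{0,t},g^{q}_{1,t})$, whose input $X=(X_s)_{s=1}^S$ and output $Y=(Y_t)_{t=1}^T$ are related by $$\big(f^{1}_{\cdot,t}*\cdots*f^{Q}_{\cdot,t}\big)\otimes\big(g^{1}_{\cdot,t}*\cdots*g^{Q}_{\cdot,t}\big) * Y_t=\sum_{s=1}^{S}W_{t,s}*X_s\qquad(t=1,\dots,T).$$ If $$\big|f^{q}_{-1,t}+f^{q}_{1,t}\big|<f^{q}_{0,t}\quad\text{and}\quad \big|g^{q}_{-1,t}+g^{q}_{1,t}\big|<g^{q}_{0,t}\qquad\text{for all } q\in\{1,\dots,Q\},\ t\in\{1,\dots,T\},$$ then the layer is (BIBO) stable.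
   Context: Signals are real arrays indexed by $\mathbb{Z}^2$ (2D) or $\mathbb{Z}$ (1D); $*$ denotes convolution (1D filters convolved with each other give 1D filters), and for 1D filters $u,v$, $u\otimes v$ is the 2D filter $(u\otimes v)_{p_1,p_2}=u_{p_1}v_{p_2}$. A length-3 filter $f$ has entries $f_{-1},f_0,f_1$ at positions $-1,0,1$. A linear model $y=h*x$ is BIBO stable if for every input $x$ with $\sup_i|x_i|<\infty$ the output satisfies $\sup_i|y_i|<\infty$. The autoregressive relation $A_t*Y_t=Z_t$ (with $A_t$ the separable filter above and $Z_t=\sum_s W_{t,s}*X_s$) is realized as $Y_t=H_t*Z_t$ with $H_t$ a convolution inverse of $A_t$ ($H_t*A_t=\delta$); the layer is called stable if such inverses can be chosen so that the resulting map $X\mapsto Y$ sends bounded inputs to bounded outputs. *)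

theory Defs
  imports "HOL-Analysis.Analysis"
begin

type_synonym sig1 = "int \<Rightarrow> real"
type_synonym sig2 = "int \<times> int \<Rightarrow> real"

definition conv1 :: "sig1 \<Rightarrow> sig1 \<Rightarrow> sig1" where
  "conv1 u v = (\<lambda>n. \<Sum>\<^sub>\<infinity>k\<in>UNIV. u k * v (n - k))"

definition shift2 :: "int \<times> int \<Rightarrow> int \<times> int \<Rightarrow> int \<times> int" where
  "shift2 p k = (fst p - fst k, snd p - snd k)"

definition conv2 :: "sig2 \<Rightarrow> sig2 \<Rightarrow> sig2" where
  "conv2 a b = (\<lambda>p. \<Sum>\<^sub>\<infinity>k\<in>UNIV. a k * b (shift2 p k))"

definition delta1 :: sig1 where "delta1 = (\<lambda>n. if n = 0 then 1 else 0)"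
definition delta2 :: sig2 where "delta2 = (\<lambda>p. if p = (0,0) then 1 else 0)"

definition conv1_list :: "sig1 list \<Rightarrow> sig1" where
  "conv1_list us = foldr conv1 us delta1"

definition tensor :: "sig1 \<Rightarrow> sig1 \<Rightarrow> sig2" where
  "tensor u v = (\<lambda>p. u (fst p) * v (snd p))"

definition bounded_sig2 :: "sig2 \<Rightarrow> bool" where
  "bounded_sig2 x \<longleftrightarrow> (\<exists>B. \<forall>p. \<bar>x p\<bar> \<le> B)"

definition finite_support2 :: "sig2 \<Rightarrow> bool" where
  "finite_support2 w \<longleftrightarrow> finite {p. w p \<noteq> 0}"

definition len3 :: "sig1 \<Rightarrow> bool" where
  "len3 u \<longleftrightarrow> (\<forall>n. n \<notin> {-1,0,1} \<longrightarrow> u n = 0)"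

definition AR_filter :: "nat \<Rightarrow> (nat \<Rightarrow> nat \<Rightarrow> sig1) \<Rightarrow> (nat \<Rightarrow> nat \<Rightarrow> sig1) \<Rightarrow> nat \<Rightarrow> sig2" where
  "AR_filter Q f g t = tensor (conv1_list (map (\<lambda>q. f q t) [1..<Q+1]))
                              (conv1_list (map (\<lambda>q. g q t) [1..<Q+1]))"

definition MA_part :: "nat \<Rightarrow> (nat \<Rightarrow> nat \<Rightarrow> sig2) \<Rightarrow> (nat \<Rightarrow> sig2) \<Rightarrow> nat \<Rightarrow> sig2" where
  "MA_part S W X t = (\<lambda>p. \<Sum>s = 1..S. conv2 (W t s) (X s) p)"

text \<open>Stability: convolution inverses H_t of the AR filters can be chosen such that
  for every bounded input X, the outputs Y_t = H_t * Z_t are well defined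
  (the defining sums converge absolutely) and bounded.\<close>
definition ARMA_stable :: "nat \<Rightarrow> nat \<Rightarrow> nat \<Rightarrow> (nat \<Rightarrow> nat \<Rightarrow> sig2)
    \<Rightarrow> (nat \<Rightarrow> nat \<Rightarrow> sig1) \<Rightarrow> (nat \<Rightarrow> nat \<Rightarrow> sig1) \<Rightarrow> bool" where
  "ARMA_stable S T Q W f g \<longleftrightarrow>
     (\<exists>H :: nat \<Rightarrow> sig2.
        (\<forall>t\<in>{1..T}. conv2 (H t) (AR_filter Q f g t) = delta2) \<and>
        (\<forall>X :: nat \<Rightarrow> sig2. (\<forall>s\<in>{1..S}. bounded_sig2 (X s)) \<longrightarrow>
           (\<forall>t\<in>{1..T}.
              (\<forall>p. (\<lambda>k. H t k * MA_part S W X t (shift2 p k)) summable_on UNIV) \<and>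
              bounded_sig2 (conv2 (H t) (MA_part S W X t)))))"

end

theory Submission
  imports Defs
begin

(* The symbol p e^{-i theta} + c + q e^{i theta} of a length-3 filter has real part at least
   c - |p + q| > 0, so it does not vanish on the unit circle. Over the reals this appears as a
   factorization into two two-tap filters whose taps have different moduli, and each of those has a
   one-sided geometric inverse in l1. Finitely supported filters with l1 inverses are closed under
   convolution, so each cascade f^1 * ... * f^Q and g^1 * ... * g^Q has an l1 inverse, and the
   tensor product of the two inverses inverts the separable AR filter. An l1 filter maps bounded
   signals to bounded signals, which gives stability. *)

lemma infsum_finite_support:
  fixes f :: "'a \<Rightarrow> real"
  assumes "finite A" and "\<And>x. x \<notin> A \<Longrightarrow> f x = 0"
  shows "(\<Sum>\<^sub>\<infinity>x\<in>UNIV. f x) = sum f A"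
proof -
  have "(\<Sum>\<^sub>\<infinity>x\<in>UNIV. f x) = (\<Sum>\<^sub>\<infinity>x\<in>A. f x)"
    by (rule infsum_cong_neutral) (use assms in auto)
  then show ?thesis
    using assms(1) by simp
qed

lemma has_sum_sum:
  fixes f :: "'i \<Rightarrow> 'a \<Rightarrow> 'b::topological_comm_monoid_add"
  assumes "finite J" and "\<And>j. j \<in> J \<Longrightarrow> (f j has_sum s j) A"
  shows "((\<lambda>x. \<Sum>j\<in>J. f j x) has_sum (\<Sum>j\<in>J. s j)) A"
  using assms by (induction J rule: finite_induct) (auto intro: has_sum_add)

lemma summable_on_mult_bounded:
  fixes f g :: "'a \<Rightarrow> real"
  assumes f: "f summable_on A" and g: "\<And>x. x \<in> A \<Longrightarrow> \<bar>g x\<bar> \<le> B"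
  shows "(\<lambda>x. f x * g x) summable_on A"
    and "\<bar>\<Sum>\<^sub>\<infinity>x\<in>A. f x * g x\<bar> \<le> B * (\<Sum>\<^sub>\<infinity>x\<in>A. \<bar>f x\<bar>)"
proof -
  have abs_f: "(\<lambda>x. B * \<bar>f x\<bar>) summable_on A"
    using f summable_on_iff_abs_summable_on_real[of f A] by (auto intro: summable_on_cmult_right)
  have le: "\<bar>f x * g x\<bar> \<le> B * \<bar>f x\<bar>" if "x \<in> A" for x
    using mult_left_mono[OF g[OF that] abs_ge_zero[of "f x"]] by (simp add: abs_mult mult.commute)
  have "(\<lambda>x. norm (f x * g x)) summable_on A"
    by (rule Infinite_Sum.abs_summable_on_comparison_test'[OF abs_f]) (use le in auto)
  then show fg: "(\<lambda>x. f x * g x) summable_on A"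
    using summable_on_iff_abs_summable_on_real by blast
  have "\<bar>\<Sum>\<^sub>\<infinity>x\<in>A. f x * g x\<bar> \<le> (\<Sum>\<^sub>\<infinity>x\<in>A. B * \<bar>f x\<bar>)"
    using norm_infsum_le[OF has_sum_infsum[OF fg] has_sum_infsum[OF abs_f]] le by auto
  also have "\<dots> = B * (\<Sum>\<^sub>\<infinity>x\<in>A. \<bar>f x\<bar>)"
    by (rule infsum_cmult_right')
  finally show "\<bar>\<Sum>\<^sub>\<infinity>x\<in>A. f x * g x\<bar> \<le> B * (\<Sum>\<^sub>\<infinity>x\<in>A. \<bar>f x\<bar>)" .
qed

lemma abs_le_infsum_abs:
  fixes f :: "'a \<Rightarrow> real"
  assumes "f summable_on A" and "x \<in> A"
  shows "\<bar>f x\<bar> \<le> (\<Sum>\<^sub>\<infinity>y\<in>A. \<bar>f y\<bar>)"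
  using finite_sum_le_infsum[of "\<lambda>y. \<bar>f y\<bar>" A "{x}"] assms
    summable_on_iff_abs_summable_on_real[of f A] by simp

lemma summable_on_product:
  fixes f :: "'a \<Rightarrow> real" and g :: "'b \<Rightarrow> real"
  assumes f: "f summable_on A" and g: "g summable_on B"
  shows "(\<lambda>(x, y). f x * g y) summable_on A \<times> B"
    and "(\<Sum>\<^sub>\<infinity>(x, y)\<in>A \<times> B. f x * g y) = (\<Sum>\<^sub>\<infinity>x\<in>A. f x) * (\<Sum>\<^sub>\<infinity>y\<in>B. g y)"
proof -
  have abs_f: "(\<lambda>x. \<bar>f x\<bar>) summable_on A" and abs_g: "(\<lambda>y. \<bar>g y\<bar>) summable_on B"
    using f g summable_on_iff_abs_summable_on_real by auto
  have "Infinite_Sum.abs_summable_on (\<lambda>(x, y). f x * g y) (A \<times> B)"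
  proof (rule Infinite_Sum.abs_summable_on_Sigma_iff[THEN iffD2], intro conjI ballI)
    fix x
    show "(\<lambda>y. norm ((\<lambda>(x, y). f x * g y) (x, y))) summable_on B"
      using summable_on_cmult_right[OF abs_g, of "\<bar>f x\<bar>"] by (simp add: abs_mult)
  next
    have "(\<lambda>x. \<bar>f x\<bar> * (\<Sum>\<^sub>\<infinity>y\<in>B. \<bar>g y\<bar>)) summable_on A"
      using summable_on_cmult_left[OF abs_f] .
    then show "(\<lambda>x. norm (\<Sum>\<^sub>\<infinity>y\<in>B. norm ((\<lambda>(x, y). f x * g y) (x, y)))) summable_on A"
      by (simp add: abs_mult infsum_cmult_right' infsum_nonneg)
  qed
  then show fg: "(\<lambda>(x, y). f x * g y) summable_on A \<times> B"
    using summable_on_iff_abs_summable_on_real by blast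
  have "(\<Sum>\<^sub>\<infinity>(x, y)\<in>A \<times> B. f x * g y) = (\<Sum>\<^sub>\<infinity>x\<in>A. \<Sum>\<^sub>\<infinity>y\<in>B. f x * g y)"
    using infsum_Sigma'_banach[of "\<lambda>x y. f x * g y" A "\<lambda>_. B"] fg by simp
  also have "\<dots> = (\<Sum>\<^sub>\<infinity>x\<in>A. f x) * (\<Sum>\<^sub>\<infinity>y\<in>B. g y)"
    by (simp add: infsum_cmult_right' infsum_cmult_left')
  finally show "(\<Sum>\<^sub>\<infinity>(x, y)\<in>A \<times> B. f x * g y) = (\<Sum>\<^sub>\<infinity>x\<in>A. f x) * (\<Sum>\<^sub>\<infinity>y\<in>B. g y)" .
qed

definition finite_support1 :: "sig1 \<Rightarrow> bool" where
  "finite_support1 a \<longleftrightarrow> finite {n. a n \<noteq> 0}"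

lemma finite_support1_summable: "finite_support1 a \<Longrightarrow> a summable_on UNIV"
  unfolding finite_support1_def by (simp add: finite_nonzero_values_imp_summable_on)

lemma conv1_commute: "conv1 u v = conv1 v u"
proof
  fix n
  show "conv1 u v n = conv1 v u n"
    unfolding conv1_def
    by (rule infsum_reindex_bij_witness[where i="\<lambda>k. n - k" and j="\<lambda>k. n - k"]) auto
qed

lemma conv1_finite_support:
  assumes "finite A" and "\<And>j. j \<notin> A \<Longrightarrow> a j = 0"
  shows "conv1 u a n = (\<Sum>j\<in>A. u (n - j) * a j)"
proof -
  have "conv1 a u n = (\<Sum>j\<in>A. a j * u (n - j))"
    unfolding conv1_def by (rule infsum_finite_support) (use assms in auto)
  then show ?thesis
    by (simp add: conv1_commute[of u] mult.commute)
qed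

lemma conv1_delta1_left: "conv1 delta1 a = a"
proof
  fix n
  show "conv1 delta1 a n = a n"
    using conv1_finite_support[of "{0}" delta1 a n] by (simp add: conv1_commute delta1_def)
qed

lemma summable_on_conv1_terms:
  fixes h g :: sig1
  assumes "h summable_on UNIV" and "g summable_on UNIV"
  shows "(\<lambda>k. h k * g (n - k)) summable_on UNIV"
  by (rule summable_on_mult_bounded(1)[OF assms(1)]) (rule abs_le_infsum_abs[OF assms(2)], simp)

lemma summable_on_conv1:
  fixes h g :: sig1
  assumes "h summable_on UNIV" and "g summable_on UNIV"
  shows "conv1 h g summable_on UNIV"
proof -
  have "(\<lambda>(k, m). h k * g m) summable_on UNIV"
    using summable_on_product(1)[OF assms] by simp
  then have "(\<lambda>(n, k). h k * g (n - k)) summable_on UNIV"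
    by (subst summable_on_reindex_bij_witness[where j="\<lambda>(n, k). (k, n - k)"
          and i="\<lambda>(k, m). (k + m, k)" and T=UNIV and h="\<lambda>(k, m). h k * g m"]) auto
  then show ?thesis
    unfolding conv1_def using summable_on_Sigma_banach[of "\<lambda>n k. h k * g (n - k)" UNIV] by simp
qed

lemma finite_support1_conv1:
  assumes "finite_support1 a" and "finite_support1 b"
  shows "finite_support1 (conv1 a b)"
proof -
  let ?A = "{n. a n \<noteq> 0}" and ?B = "{n. b n \<noteq> 0}"
  have "{n. conv1 a b n \<noteq> 0} \<subseteq> (\<lambda>(i, j). i + j) ` (?A \<times> ?B)"
  proof
    fix n
    assume "n \<in> {n. conv1 a b n \<noteq> 0}"
    moreover have "conv1 a b n = (\<Sum>j\<in>?B. a (n - j) * b j)"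
      by (rule conv1_finite_support) (use assms(2) in \<open>auto simp: finite_support1_def\<close>)
    ultimately obtain j where "j \<in> ?B" "a (n - j) * b j \<noteq> 0"
      by (auto elim: sum.not_neutral_contains_not_neutral)
    then have "(n - j, j) \<in> ?A \<times> ?B"
      by simp
    then show "n \<in> (\<lambda>(i, j). i + j) ` (?A \<times> ?B)"
      by (rule rev_image_eqI) simp
  qed
  moreover have "finite ((\<lambda>(i, j). i + j) ` (?A \<times> ?B))"
    using assms by (simp add: finite_support1_def)
  ultimately show ?thesis
    unfolding finite_support1_def by (rule finite_subset)
qed

lemma conv1_assoc:
  assumes h: "h summable_on UNIV" and g: "g summable_on UNIV" and a: "finite_support1 a"
  shows "conv1 (conv1 h g) a = conv1 h (conv1 g a)"
proof
  fix n
  define A where "A = {n. a n \<noteq> 0}"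
  have A: "finite A" "\<And>j. j \<notin> A \<Longrightarrow> a j = 0"
    using a by (auto simp: A_def finite_support1_def)
  have terms: "((\<lambda>k. h k * g (n - j - k) * a j) has_sum conv1 h g (n - j) * a j) UNIV" for j
    unfolding conv1_def by (intro has_sum_cmult_left has_sum_infsum summable_on_conv1_terms h g)
  have "((\<lambda>k. \<Sum>j\<in>A. h k * g (n - j - k) * a j) has_sum (\<Sum>j\<in>A. conv1 h g (n - j) * a j)) UNIV"
    by (rule has_sum_sum[OF A(1)]) (rule terms)
  moreover have "(\<Sum>j\<in>A. h k * g (n - j - k) * a j) = h k * conv1 g a (n - k)" for k
    by (simp add: conv1_finite_support[OF A] sum_distrib_left algebra_simps)
  ultimately show "conv1 (conv1 h g) a n = conv1 h (conv1 g a) n"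
    by (simp add: conv1_def[of h "conv1 g a"] conv1_finite_support[OF A] infsumI)
qed

definition l1_invertible :: "sig1 \<Rightarrow> bool" where
  "l1_invertible a \<longleftrightarrow> (\<exists>h. h summable_on UNIV \<and> conv1 h a = delta1)"

lemma l1_invertible_conv1:
  assumes "finite_support1 a" "finite_support1 b" "l1_invertible a" "l1_invertible b"
  shows "l1_invertible (conv1 a b)"
proof -
  obtain h g where h: "h summable_on UNIV" "conv1 h a = delta1"
    and g: "g summable_on UNIV" "conv1 g b = delta1"
    using assms(3,4) unfolding l1_invertible_def by blast
  have "conv1 (conv1 h g) (conv1 a b) = conv1 h (conv1 g (conv1 a b))"
    by (rule conv1_assoc[OF h(1) g(1) finite_support1_conv1[OF assms(1,2)]])
  also have "conv1 g (conv1 a b) = conv1 g (conv1 b a)"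
    by (simp only: conv1_commute[of a b])
  also have "conv1 g (conv1 b a) = conv1 (conv1 g b) a"
    by (rule conv1_assoc[symmetric, OF g(1) finite_support1_summable[OF assms(2)] assms(1)])
  also have "\<dots> = a"
    by (simp add: g(2) conv1_delta1_left)
  finally show ?thesis
    unfolding l1_invertible_def using h summable_on_conv1[OF h(1) g(1)] by auto
qed

lemma conv1_list_l1_invertible:
  assumes "\<And>u. u \<in> set us \<Longrightarrow> finite_support1 u \<and> l1_invertible u"
  shows "finite_support1 (conv1_list us) \<and> l1_invertible (conv1_list us)"
  using assms
proof (induction us)
  case Nil
  have "finite_support1 delta1"
    unfolding finite_support1_def delta1_def by simp
  then show ?case
    unfolding conv1_list_def l1_invertible_def
    using finite_support1_summable conv1_delta1_left by auto
next
  case (Cons u us)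
  then show ?case
    by (simp add: conv1_list_def finite_support1_conv1 l1_invertible_conv1)
qed

definition causal_geometric :: "real \<Rightarrow> sig1" where
  "causal_geometric \<rho> k = (if 0 \<le> k then \<rho> ^ nat k else 0)"

lemma summable_on_causal_geometric:
  assumes "\<bar>\<rho>\<bar> < 1"
  shows "causal_geometric \<rho> summable_on UNIV"
proof -
  have "(\<lambda>k::nat. \<rho> ^ k) summable_on UNIV"
    using assms by (intro norm_summable_imp_summable_on) (simp add: power_abs summable_geometric)
  then have "causal_geometric \<rho> summable_on range int"
    by (subst summable_on_reindex) (simp_all add: o_def causal_geometric_def)
  moreover have "causal_geometric \<rho> summable_on range int \<longleftrightarrow> causal_geometric \<rho> summable_on UNIV"
  proof (rule summable_on_cong_neutral)
    fix k
    assume "k \<in> UNIV - range int"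
    then have "\<not> 0 \<le> k"
      using zero_le_imp_eq_int by blast
    then show "causal_geometric \<rho> k = 0"
      by (simp add: causal_geometric_def)
  qed auto
  ultimately show ?thesis
    by blast
qed

lemma causal_geometric_recurrence:
  "causal_geometric \<rho> k - \<rho> * causal_geometric \<rho> (k - 1) = delta1 k"
proof (cases "0 < k")
  case True
  then have "nat k = Suc (nat (k - 1))"
    by simp
  with True show ?thesis
    by (simp add: causal_geometric_def delta1_def)
qed (simp add: causal_geometric_def delta1_def)

definition two_tap :: "real \<Rightarrow> real \<Rightarrow> int \<Rightarrow> sig1" where
  "two_tap a b m = (\<lambda>n. if n = m then a else if n = m + 1 then b else 0)"

lemma finite_support1_two_tap: "finite_support1 (two_tap a b m)"
  unfolding finite_support1_def by (rule finite_subset[of _ "{m, m + 1}"]) (auto simp: two_tap_def)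

lemma conv1_two_tap: "conv1 u (two_tap a b m) n = u (n - m) * a + u (n - m - 1) * b"
proof -
  have "conv1 u (two_tap a b m) n = (\<Sum>j\<in>{m, m + 1}. u (n - j) * two_tap a b m j)"
    by (rule conv1_finite_support) (auto simp: two_tap_def)
  then show ?thesis
    by (simp add: two_tap_def algebra_simps)
qed

lemma l1_invertible_two_tap:
  assumes "\<bar>a\<bar> \<noteq> \<bar>b\<bar>"
  shows "l1_invertible (two_tap a b m)"
proof (cases "\<bar>b\<bar> < \<bar>a\<bar>")
  case True
  define \<rho> where "\<rho> = - b / a"
  have "a \<noteq> 0" and \<rho>: "\<bar>\<rho>\<bar> < 1"
    using True by (auto simp: \<rho>_def abs_divide)
  define h where "h = (\<lambda>n. causal_geometric \<rho> (n + m) / a)"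
  have shifted: "(\<lambda>n. causal_geometric \<rho> (n + m)) summable_on UNIV"
    using summable_on_causal_geometric[OF \<rho>]
    by (subst summable_on_reindex_bij_witness[where j="\<lambda>n. n + m" and i="\<lambda>k. k - m"
          and T=UNIV and h="causal_geometric \<rho>"]) auto
  have "h summable_on UNIV"
    using summable_on_cmult_left[OF shifted, of "1 / a"] by (simp add: h_def)
  moreover have "conv1 h (two_tap a b m) n = delta1 n" for n
  proof -
    have "conv1 h (two_tap a b m) n = causal_geometric \<rho> n - \<rho> * causal_geometric \<rho> (n - 1)"
      using \<open>a \<noteq> 0\<close> by (simp add: conv1_two_tap h_def \<rho>_def)
    then show ?thesis
      by (simp add: causal_geometric_recurrence)
  qed
  ultimately show ?thesis
    unfolding l1_invertible_def by blast
next
  case False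
  define \<rho> where "\<rho> = - a / b"
  have "b \<noteq> 0" and \<rho>: "\<bar>\<rho>\<bar> < 1"
    using False assms by (auto simp: \<rho>_def abs_divide)
  (* For |a| < |b| the inverse is anticausal, supported on n \<le> - m - 1. *)
  define h where "h = (\<lambda>n. causal_geometric \<rho> (- n - m - 1) / b)"
  have reflected: "(\<lambda>n. causal_geometric \<rho> (- n - m - 1)) summable_on UNIV"
    using summable_on_causal_geometric[OF \<rho>]
    by (subst summable_on_reindex_bij_witness[where j="\<lambda>n. - n - m - 1" and i="\<lambda>k. - k - m - 1"
          and T=UNIV and h="causal_geometric \<rho>"]) auto
  have "h summable_on UNIV"
    using summable_on_cmult_left[OF reflected, of "1 / b"] by (simp add: h_def)
  moreover have "conv1 h (two_tap a b m) n = delta1 n" for n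
  proof -
    have "conv1 h (two_tap a b m) n = causal_geometric \<rho> (- n) - \<rho> * causal_geometric \<rho> (- n - 1)"
      using \<open>b \<noteq> 0\<close> by (simp add: conv1_two_tap h_def \<rho>_def)
    then show ?thesis
      by (simp add: causal_geometric_recurrence delta1_def)
  qed
  ultimately show ?thesis
    unfolding l1_invertible_def by blast
qed

(* (1 + beta z) (p z^-1 + d) = p z^-1 + c + q z, where beta is a root of p beta^2 - c beta + q;
   the root is real because c^2 - 4 p q > (p + q)^2 - 4 p q = (p - q)^2. *)
lemma trinomial_factorization:
  fixes p c q :: real
  assumes "p \<noteq> 0" and "\<bar>p + q\<bar> < c"
  obtains \<beta> d where "\<bar>\<beta>\<bar> \<noteq> 1" and "\<bar>d\<bar> \<noteq> \<bar>p\<bar>" and "c = d + \<beta> * p" and "q = \<beta> * d"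
proof -
  have "(p + q)\<^sup>2 < c\<^sup>2"
    using assms(2) power_strict_mono[of "\<bar>p + q\<bar>" c 2] by simp
  moreover have "(p + q)\<^sup>2 - 4 * p * q = (p - q)\<^sup>2"
    by (simp add: power2_eq_square algebra_simps)
  ultimately have disc: "0 < c\<^sup>2 - 4 * p * q"
    using zero_le_power2[of "p - q"] by linarith
  define \<beta> where "\<beta> = (c + sqrt (c\<^sup>2 - 4 * p * q)) / (2 * p)"
  define d where "d = c - \<beta> * p"
  have "(2 * p * \<beta> - c)\<^sup>2 = c\<^sup>2 - 4 * p * q"
    using assms(1) disc by (simp add: \<beta>_def)
  then have "4 * p * (p * \<beta>\<^sup>2 - c * \<beta> + q) = 0"
    by (simp add: power2_eq_square algebra_simps)
  then have "p * \<beta>\<^sup>2 - c * \<beta> + q = 0"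
    using assms(1) by simp
  then have q: "q = \<beta> * d"
    by (simp add: d_def power2_eq_square algebra_simps)
  have c: "c = d + \<beta> * p"
    by (simp add: d_def)
  have "\<bar>\<beta>\<bar> \<noteq> 1"
  proof
    assume "\<bar>\<beta>\<bar> = 1"
    then have "\<beta> = 1 \<or> \<beta> = -1"
      by linarith
    then show False
      using assms(2) c q by auto
  qed
  moreover have "\<bar>d\<bar> \<noteq> \<bar>p\<bar>"
  proof
    assume "\<bar>d\<bar> = \<bar>p\<bar>"
    then have "d = p \<or> d = - p"
      by linarith
    then show False
      using assms(2) c q by (auto simp: algebra_simps)
  qed
  ultimately show thesis
    using that c q by blast
qed

lemma len3_support: "len3 u \<Longrightarrow> n \<notin> {-1, 0, 1} \<Longrightarrow> u n = 0"
  unfolding len3_def by blast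

lemma finite_support1_len3: "len3 u \<Longrightarrow> finite_support1 u"
  unfolding finite_support1_def
  by (rule finite_subset[of _ "{-1, 0, 1}"]) (auto dest: len3_support)

lemma l1_invertible_len3:
  assumes "len3 u" and "\<bar>u (-1) + u 1\<bar> < u 0"
  shows "l1_invertible u"
proof (cases "u (-1) = 0")
  case True
  have "u = two_tap (u 0) (u 1) 0"
  proof
    fix n
    show "u n = two_tap (u 0) (u 1) 0 n"
      using len3_support[OF assms(1), of n] True by (auto simp: two_tap_def)
  qed
  moreover have "\<bar>u 0\<bar> \<noteq> \<bar>u 1\<bar>"
    using assms(2) True by auto
  ultimately show ?thesis
    using l1_invertible_two_tap by metis
next
  case False
  obtain \<beta> d where \<beta>: "\<bar>\<beta>\<bar> \<noteq> 1" and d: "\<bar>d\<bar> \<noteq> \<bar>u (-1)\<bar>"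
    and c: "u 0 = d + \<beta> * u (-1)" and q: "u 1 = \<beta> * d"
    using trinomial_factorization[OF False assms(2)] .
  have "u = conv1 (two_tap (u (-1)) d (-1)) (two_tap 1 \<beta> 0)"
  proof
    fix n
    show "u n = conv1 (two_tap (u (-1)) d (-1)) (two_tap 1 \<beta> 0) n"
      unfolding conv1_two_tap using len3_support[OF assms(1), of n] c q by (auto simp: two_tap_def)
  qed
  moreover have "l1_invertible (two_tap (u (-1)) d (-1))"
    using d by (intro l1_invertible_two_tap) simp
  moreover have "l1_invertible (two_tap 1 \<beta> 0)"
    using \<beta> by (intro l1_invertible_two_tap) simp
  ultimately show ?thesis
    using l1_invertible_conv1 finite_support1_two_tap by metis
qed

lemma summable_on_tensor:
  assumes "u summable_on UNIV" and "v summable_on UNIV"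
  shows "tensor u v summable_on UNIV"
proof -
  have "tensor u v = (\<lambda>(x, y). u x * v y)"
    by (auto simp: tensor_def)
  then show ?thesis
    using summable_on_product(1)[OF assms] by simp
qed

lemma conv2_tensor:
  fixes h1 a1 h2 a2 :: sig1
  assumes "h1 summable_on UNIV" "a1 summable_on UNIV" "h2 summable_on UNIV" "a2 summable_on UNIV"
  shows "conv2 (tensor h1 h2) (tensor a1 a2) = tensor (conv1 h1 a1) (conv1 h2 a2)"
proof
  fix p :: "int \<times> int"
  obtain n1 n2 where p: "p = (n1, n2)"
    by fastforce
  have "conv2 (tensor h1 h2) (tensor a1 a2) p
      = (\<Sum>\<^sub>\<infinity>(k1, k2)\<in>UNIV \<times> UNIV. (h1 k1 * a1 (n1 - k1)) * (h2 k2 * a2 (n2 - k2)))"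
    by (simp add: p conv2_def tensor_def shift2_def case_prod_beta' algebra_simps)
  also have "\<dots> = conv1 h1 a1 n1 * conv1 h2 a2 n2"
    unfolding conv1_def by (intro summable_on_product(2) summable_on_conv1_terms assms)
  finally show "conv2 (tensor h1 h2) (tensor a1 a2) p = tensor (conv1 h1 a1) (conv1 h2 a2) p"
    by (simp add: p tensor_def)
qed

lemma tensor_l1_inverse:
  assumes "finite_support1 a1" "l1_invertible a1" "finite_support1 a2" "l1_invertible a2"
  shows "\<exists>H. H summable_on UNIV \<and> conv2 H (tensor a1 a2) = delta2"
proof -
  obtain h1 h2 where h1: "h1 summable_on UNIV" "conv1 h1 a1 = delta1"
    and h2: "h2 summable_on UNIV" "conv1 h2 a2 = delta1"
    using assms(2,4) unfolding l1_invertible_def by blast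
  have "conv2 (tensor h1 h2) (tensor a1 a2) = tensor delta1 delta1"
    using conv2_tensor h1 h2 finite_support1_summable assms(1,3) by metis
  also have "\<dots> = delta2"
    by (auto simp: tensor_def delta1_def delta2_def)
  finally show ?thesis
    using summable_on_tensor[OF h1(1) h2(1)] by blast
qed

lemma AR_filter_l1_inverse:
  assumes "\<forall>q\<in>{1..Q}. len3 (f q t) \<and> len3 (g q t)"
    and "\<forall>q\<in>{1..Q}. \<bar>f q t (-1) + f q t 1\<bar> < f q t 0 \<and> \<bar>g q t (-1) + g q t 1\<bar> < g q t 0"
  shows "\<exists>H. H summable_on UNIV \<and> conv2 H (AR_filter Q f g t) = delta2"
proof -
  have "finite_support1 (conv1_list (map (\<lambda>q. f q t) [1..<Q+1]))
      \<and> l1_invertible (conv1_list (map (\<lambda>q. f q t) [1..<Q+1]))"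
    by (rule conv1_list_l1_invertible) (use assms in \<open>auto intro: finite_support1_len3 l1_invertible_len3\<close>)
  moreover have "finite_support1 (conv1_list (map (\<lambda>q. g q t) [1..<Q+1]))
      \<and> l1_invertible (conv1_list (map (\<lambda>q. g q t) [1..<Q+1]))"
    by (rule conv1_list_l1_invertible) (use assms in \<open>auto intro: finite_support1_len3 l1_invertible_len3\<close>)
  ultimately show ?thesis
    unfolding AR_filter_def using tensor_l1_inverse by blast
qed

lemma conv2_l1_bounded:
  assumes w: "w summable_on UNIV" and x: "bounded_sig2 x"
  shows "(\<lambda>k. w k * x (shift2 p k)) summable_on UNIV" and "bounded_sig2 (conv2 w x)"
proof -
  obtain B where B: "\<And>p. \<bar>x p\<bar> \<le> B"
    using x unfolding bounded_sig2_def by blast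
  show "(\<lambda>k. w k * x (shift2 p k)) summable_on UNIV"
    by (rule summable_on_mult_bounded(1)[OF w]) (rule B)
  have "\<bar>conv2 w x p\<bar> \<le> B * (\<Sum>\<^sub>\<infinity>k\<in>UNIV. \<bar>w k\<bar>)" for p
    unfolding conv2_def by (rule summable_on_mult_bounded(2)[OF w]) (rule B)
  then show "bounded_sig2 (conv2 w x)"
    unfolding bounded_sig2_def by blast
qed

lemma bounded_sig2_sum:
  assumes "\<And>i. i \<in> I \<Longrightarrow> bounded_sig2 (x i)"
  shows "bounded_sig2 (\<lambda>p. \<Sum>i\<in>I. x i p)"
proof -
  obtain B where B: "\<And>i p. i \<in> I \<Longrightarrow> \<bar>x i p\<bar> \<le> B i"
    using assms unfolding bounded_sig2_def by metis
  have "\<bar>\<Sum>i\<in>I. x i p\<bar> \<le> (\<Sum>i\<in>I. B i)" for p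
  proof -
    have "\<bar>\<Sum>i\<in>I. x i p\<bar> \<le> (\<Sum>i\<in>I. \<bar>x i p\<bar>)"
      by (rule sum_abs)
    also have "\<dots> \<le> (\<Sum>i\<in>I. B i)"
      by (rule sum_mono) (rule B)
    finally show ?thesis .
  qed
  then show ?thesis
    unfolding bounded_sig2_def by blast
qed

lemma bounded_MA_part:
  assumes "\<forall>s\<in>{1..S}. finite_support2 (W t s)" and "\<forall>s\<in>{1..S}. bounded_sig2 (X s)"
  shows "bounded_sig2 (MA_part S W X t)"
  unfolding MA_part_def
proof (rule bounded_sig2_sum)
  fix s
  assume s: "s \<in> {1..S}"
  then have "W t s summable_on UNIV"
    using assms(1) by (simp add: finite_support2_def finite_nonzero_values_imp_summable_on)
  then show "bounded_sig2 (conv2 (W t s) (X s))"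
    using conv2_l1_bounded(2) assms(2) s by blast
qed

theorem theorem3:
  fixes S T Q :: nat
    and W :: "nat \<Rightarrow> nat \<Rightarrow> sig2"
    and f g :: "nat \<Rightarrow> nat \<Rightarrow> sig1"
  assumes "S \<ge> 1" and "T \<ge> 1" and "Q \<ge> 1"
    and "\<forall>t\<in>{1..T}. \<forall>s\<in>{1..S}. finite_support2 (W t s)"
    and "\<forall>q\<in>{1..Q}. \<forall>t\<in>{1..T}. len3 (f q t) \<and> len3 (g q t)"
    and "\<forall>q\<in>{1..Q}. \<forall>t\<in>{1..T}.
           \<bar>f q t (-1) + f q t 1\<bar> < f q t 0 \<and> \<bar>g q t (-1) + g q t 1\<bar> < g q t 0"
  shows "ARMA_stable S T Q W f g"
proof -
  have "\<forall>t\<in>{1..T}. \<exists>H. H summable_on UNIV \<and> conv2 H (AR_filter Q f g t) = delta2"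
    using assms(5,6) by (auto intro!: AR_filter_l1_inverse)
  then obtain H where H: "\<And>t. t \<in> {1..T} \<Longrightarrow> H t summable_on UNIV"
    "\<And>t. t \<in> {1..T} \<Longrightarrow> conv2 (H t) (AR_filter Q f g t) = delta2"
    by metis
  have "(\<forall>p. (\<lambda>k. H t k * MA_part S W X t (shift2 p k)) summable_on UNIV)
      \<and> bounded_sig2 (conv2 (H t) (MA_part S W X t))"
    if "\<forall>s\<in>{1..S}. bounded_sig2 (X s)" and t: "t \<in> {1..T}" for X t
  proof -
    have "bounded_sig2 (MA_part S W X t)"
      using bounded_MA_part assms(4) that by blast
    then show ?thesis
      using conv2_l1_bounded H(1)[OF t] by blast
  qed
  then show ?thesis
    unfolding ARMA_stable_def using H(2) by blast
qed

end
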